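(* For any $\gamma\ge0$, the function \[ S_\gamma(x)=\hat n_0(x)+\gamma\,m(x),\qquad m(x)=\frac{x^2e^x}{(e^x-1)^2}, \] is a stationary (time-independent) super-solution of the Kompaneets problem.
   Context: $\hat n_0(x)=\frac{x^2}{e^x-1}$. Let $J(x,n)=x^2\partial_xn+(x^2-2x)n+n^2$. A function $n(x,t)$, $C^{2,1}$ for $x,t>0$, with $n_t\to n_0$ in $L^1$ as $t\to0$, such that for $0<s\le t$ the limit $n_t(0)=\lim_{x\to0^+}n_t(x)$ exists and $\lim_{x\to0^+}\int_s^t|x^2\partial_xn_\tau(x)|\,d\tau=0$, is a super-solution of the Kompaneets problem if for all $0<s\le t$: $\partial_tn\ge\partial_xJ(x,n)$ and $\liminf_{x\to\infty}\int_s^tJ(x,n_\tau)\,d\tau\ge0$. *)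

theory Defs
  imports "HOL-Analysis.Analysis"
begin

definition n0hat :: "real \<Rightarrow> real" where
  "n0hat x = x^2 / (exp x - 1)"

definition mfun :: "real \<Rightarrow> real" where
  "mfun x = x^2 * exp x / (exp x - 1)^2"

definition Jflux :: "real \<Rightarrow> real \<Rightarrow> real \<Rightarrow> real" where
  "Jflux x n nx = x^2 * nx + (x^2 - 2*x) * n + n^2"

text \<open>Functions n(x,t) are written as n x t. Partial derivatives.\<close>
definition px :: "(real \<Rightarrow> real \<Rightarrow> real) \<Rightarrow> real \<Rightarrow> real \<Rightarrow> real" where
  "px n x t = deriv (\<lambda>y. n y t) x"

definition pxx :: "(real \<Rightarrow> real \<Rightarrow> real) \<Rightarrow> real \<Rightarrow> real \<Rightarrow> real" where
  "pxx n x t = deriv (\<lambda>y. px n y t) x"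

definition pt :: "(real \<Rightarrow> real \<Rightarrow> real) \<Rightarrow> real \<Rightarrow> real \<Rightarrow> real" where
  "pt n x t = deriv (\<lambda>\<tau>. n x \<tau>) t"

definition C21 :: "(real \<Rightarrow> real \<Rightarrow> real) \<Rightarrow> bool" where
  "C21 n \<longleftrightarrow>
     (\<forall>x>0. \<forall>t>0. (\<lambda>y. n y t) differentiable (at x)
                 \<and> (\<lambda>y. px n y t) differentiable (at x)
                 \<and> (\<lambda>\<tau>. n x \<tau>) differentiable (at t))
   \<and> continuous_on ({0<..} \<times> {0<..}) (\<lambda>(x,t). n x t)
   \<and> continuous_on ({0<..} \<times> {0<..}) (\<lambda>(x,t). px n x t)
   \<and> continuous_on ({0<..} \<times> {0<..}) (\<lambda>(x,t). pxx n x t)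
   \<and> continuous_on ({0<..} \<times> {0<..}) (\<lambda>(x,t). pt n x t)"

definition kompaneets_supersolution ::
  "(real \<Rightarrow> real) \<Rightarrow> (real \<Rightarrow> real \<Rightarrow> real) \<Rightarrow> bool" where
  "kompaneets_supersolution n0 n \<longleftrightarrow>
     C21 n
   \<comment> \<open>n_t \<rightarrow> n_0 in L^1(0,\<infinity>) as t \<rightarrow> 0\<close>
   \<and> set_integrable lborel {0<..} n0
   \<and> (\<forall>\<^sub>F t in at_right 0. set_integrable lborel {0<..} (\<lambda>x. n x t))
   \<and> ((\<lambda>t. LINT x:{0<..}|lborel. \<bar>n x t - n0 x\<bar>) \<longlongrightarrow> 0) (at_right 0)
   \<comment> \<open>boundary behaviour at x = 0\<close>
   \<and> (\<forall>t>0. \<exists>L. ((\<lambda>x. n x t) \<longlongrightarrow> L) (at_right 0))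
   \<and> (\<forall>s t. 0 < s \<and> s \<le> t \<longrightarrow>
        ((\<lambda>x. integral {s..t} (\<lambda>\<tau>. \<bar>x^2 * px n x \<tau>\<bar>)) \<longlongrightarrow> 0) (at_right 0))
   \<comment> \<open>differential inequality n_t \<ge> \<partial>_x J(x,n)\<close>
   \<and> (\<forall>x>0. \<forall>t>0.
        pt n x t \<ge> deriv (\<lambda>y. Jflux y (n y t) (px n y t)) x)
   \<comment> \<open>flux condition at infinity\<close>
   \<and> (\<forall>s t. 0 < s \<and> s \<le> t \<longrightarrow>
        Liminf at_top (\<lambda>x. ereal (integral {s..t} (\<lambda>\<tau>. Jflux x (n x \<tau>) (px n x \<tau>)))) \<ge> 0)"

end

theory Submission
  imports Defs "HOL-Real_Asymp.Real_Asymp"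
begin

text \<open>Write \<open>f(x) = 1/(e^x - 1)\<close> for the Bose-Einstein occupation number, so that
  \<open>n\<^sub>0(x) = x\<^sup>2 f\<close>, \<open>m(x) = x\<^sup>2 f(1+f)\<close> and \<open>S\<^sub>\<gamma> = x\<^sup>2 u\<close> with \<open>u = f + \<gamma> f(1+f)\<close>.
  For profiles \<open>n = x\<^sup>2 u\<close> the Kompaneets flux is \<open>x\<^sup>4 (u' + u + u\<^sup>2)\<close>, and \<open>f\<close> solves
  \<open>f' = -f(1+f)\<close>; this makes \<open>n\<^sub>0\<close> a zero-flux equilibrium and gives \<open>J(x, S\<^sub>\<gamma>) = \<gamma>\<^sup>2 m\<^sup>2\<close>.
  Since \<open>S\<^sub>\<gamma>\<close> is stationary, the super-solution inequality reduces to \<open>(m\<^sup>2)' \<le> 0\<close>, i.e.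
  \<open>x (1 + 2f) = x coth(x/2) \<ge> 2\<close>, which is \<open>tanh y \<le> y\<close>; the flux condition at infinity
  holds because \<open>J \<ge> 0\<close>. The remaining conditions are boundary behaviour and integrability:
  \<open>S\<^sub>\<gamma> \<rightarrow> \<gamma>\<close> and \<open>x\<^sup>2 S\<^sub>\<gamma>' \<rightarrow> 0\<close> at \<open>0\<close>, and \<open>S\<^sub>\<gamma> \<le> 4(1+\<gamma>) exp(-x/4)\<close>.\<close>

lemma tanh_real_le_self:
  fixes x :: real
  assumes "0 \<le> x"
  shows "tanh x \<le> x"
proof -
  have "0 - tanh 0 \<le> x - tanh x"
    using assms
    by (intro DERIV_nonneg_imp_nondecreasing[where f = "\<lambda>y. y - tanh y"])
       (auto intro!: derivative_eq_intros)
  then show ?thesis by simp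
qed

lemma set_integrable_exp_minus:
  fixes a c :: real
  assumes "0 < a"
  shows "set_integrable lborel {c..} (\<lambda>x. exp (- a * x))"
proof -
  have "(\<lambda>x. exp (- a * x)) absolutely_integrable_on {c..}"
    using integrable_on_exp_minus_to_infinity[OF assms]
    by (subst absolutely_integrable_on_iff_nonneg) auto
  then show ?thesis
    unfolding set_integrable_def by (simp add: integrable_completion)
qed

lemma continuous_on_Times_fst:
  "continuous_on A f \<Longrightarrow> continuous_on (A \<times> B) (\<lambda>(x, t). f x)"
  by (auto intro: continuous_on_compose2[OF _ continuous_on_fst] simp: case_prod_beta')

lemma Jflux_occupation:
  "Jflux x (x^2 * u) (2 * x * u + x^2 * u') = x^4 * (u' + u + u^2)"
  unfolding Jflux_def by (simp add: algebra_simps power2_eq_square power4_eq_xxxx)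

lemma px_stationary_eventually:
  assumes S': "\<And>x. 0 < x \<Longrightarrow> (S has_real_derivative S' x) (at x)"
    and "0 < x"
  shows "\<forall>\<^sub>F y in nhds x. px (\<lambda>y t. S y) y t = S' y"
proof -
  have "\<forall>\<^sub>F y in nhds x. y \<in> {0<..}"
    using \<open>0 < x\<close> by (intro eventually_nhds_in_open) auto
  then show ?thesis
    by eventually_elim (auto simp: px_def intro: DERIV_imp_deriv S')
qed

lemma C21_stationary:
  assumes S': "\<And>x. 0 < x \<Longrightarrow> (S has_real_derivative S' x) (at x)"
    and S'': "\<And>x. 0 < x \<Longrightarrow> (S' has_real_derivative S'' x) (at x)"
    and "continuous_on {0<..} S''"
  shows "C21 (\<lambda>x t. S x)"
proof -
  have px_eventually: "\<forall>\<^sub>F y in nhds x. px (\<lambda>y t. S y) y t = S' y" if "0 < x" for x t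
    using S' that by (rule px_stationary_eventually)
  have px: "px (\<lambda>y t. S y) x t = S' x" if "0 < x" for x t
    using eventually_nhds_x_imp_x[OF px_eventually[OF that]] .
  have pxx: "pxx (\<lambda>y t. S y) x t = S'' x" if "0 < x" for x t
    unfolding pxx_def
    using deriv_cong_ev[OF px_eventually[OF that] refl] DERIV_imp_deriv[OF S''[OF that]]
    by simp
  have cont_S: "continuous_on {0<..} S" and cont_S': "continuous_on {0<..} S'"
    using S' S'' by (auto intro!: continuous_at_imp_continuous_on DERIV_isCont)
  have "(\<lambda>y. px (\<lambda>y t. S y) y t) differentiable (at x)" if "0 < x" for x t
    using DERIV_cong_ev[OF refl px_eventually[OF that] refl] S''[OF that]
    by (auto simp: real_differentiable_def)
  moreover have "continuous_on ({0<..} \<times> {0<..}) (\<lambda>(x, t). px (\<lambda>y t. S y) x t)"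
    using continuous_on_Times_fst[OF cont_S'] by (rule continuous_on_eq) (auto simp: px)
  moreover have "continuous_on ({0<..} \<times> {0<..}) (\<lambda>(x, t). pxx (\<lambda>y t. S y) x t)"
    using continuous_on_Times_fst[OF assms(3)] by (rule continuous_on_eq) (auto simp: pxx)
  ultimately show ?thesis
    using S' continuous_on_Times_fst[OF cont_S]
    by (auto simp: C21_def pt_def real_differentiable_def)
qed

lemma kompaneets_supersolution_stationary:
  assumes S': "\<And>x. 0 < x \<Longrightarrow> (S has_real_derivative S' x) (at x)"
    and S'': "\<And>x. 0 < x \<Longrightarrow> (S' has_real_derivative S'' x) (at x)"
    and "continuous_on {0<..} S''"
    and "set_integrable lborel {0<..} S"
    and "(S \<longlongrightarrow> L) (at_right 0)"
    and x2_S': "((\<lambda>x. x^2 * S' x) \<longlongrightarrow> 0) (at_right 0)"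
    and flux_deriv_nonpos: "\<And>x. 0 < x \<Longrightarrow> deriv (\<lambda>y. Jflux y (S y) (S' y)) x \<le> 0"
    and flux_at_top: "\<forall>\<^sub>F x in at_top. 0 \<le> Jflux x (S x) (S' x)"
  shows "kompaneets_supersolution S (\<lambda>x t. S x)"
proof -
  have px_eventually: "\<forall>\<^sub>F y in nhds x. px (\<lambda>y t. S y) y t = S' y" if "0 < x" for x t
    using S' that by (rule px_stationary_eventually)
  have px: "px (\<lambda>y t. S y) x t = S' x" if "0 < x" for x t
    using eventually_nhds_x_imp_x[OF px_eventually[OF that]] .
  have "((\<lambda>x. integral {s..t} (\<lambda>\<tau>. \<bar>x^2 * px (\<lambda>y t. S y) x \<tau>\<bar>)) \<longlongrightarrow> 0) (at_right 0)"
    if "s \<le> t" for s t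
  proof (rule Lim_transform_eventually)
    show "((\<lambda>x. (t - s) * \<bar>x^2 * S' x\<bar>) \<longlongrightarrow> 0) (at_right 0)"
      using tendsto_mult_right_zero[OF tendsto_rabs_zero[OF x2_S']] .
    show "\<forall>\<^sub>F x in at_right 0. (t - s) * \<bar>x^2 * S' x\<bar> =
            integral {s..t} (\<lambda>\<tau>. \<bar>x^2 * px (\<lambda>y t. S y) x \<tau>\<bar>)"
      using eventually_at_right_less[of 0] by eventually_elim (use that in \<open>simp add: px\<close>)
  qed
  moreover have "deriv (\<lambda>y. Jflux y (S y) (px (\<lambda>y t. S y) y t)) x \<le> 0" if "0 < x" for x t
  proof -
    have "\<forall>\<^sub>F y in nhds x. Jflux y (S y) (px (\<lambda>y t. S y) y t) = Jflux y (S y) (S' y)"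
      using px_eventually[OF that, of t] by eventually_elim simp
    from deriv_cong_ev[OF this refl] show ?thesis
      using flux_deriv_nonpos[OF that] by simp
  qed
  moreover have "Liminf at_top (\<lambda>x. ereal (integral {s..t}
                   (\<lambda>\<tau>. Jflux x (S x) (px (\<lambda>y t. S y) x \<tau>)))) \<ge> 0"
    if "s \<le> t" for s t
  proof (rule Liminf_bounded)
    show "\<forall>\<^sub>F x in at_top. 0 \<le> ereal (integral {s..t} (\<lambda>\<tau>. Jflux x (S x) (px (\<lambda>y t. S y) x \<tau>)))"
      using flux_at_top eventually_gt_at_top[of 0]
      by eventually_elim (use that in \<open>simp add: px\<close>)
  qed
  ultimately show ?thesis
    using assms C21_stationary[OF S' S'']
    by (auto simp: kompaneets_supersolution_def pt_def)
qed

definition bose :: "real \<Rightarrow> real" where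
  "bose x = 1 / (exp x - 1)"

lemma bose_pos: "0 < x \<Longrightarrow> 0 < bose x"
  by (simp add: bose_def)

lemma bose_has_real_derivative:
  assumes "x \<noteq> 0"
  shows "(bose has_real_derivative - (bose x * (1 + bose x))) (at x)"
proof -
  have "exp x - 1 \<noteq> 0"
    using assms by simp
  then show ?thesis
    unfolding bose_def[abs_def]
    by (auto intro!: derivative_eq_intros simp: field_simps power2_eq_square)
qed

lemma continuous_on_bose: "continuous_on {0<..} bose"
  by (auto intro!: continuous_at_imp_continuous_on DERIV_isCont bose_has_real_derivative)

lemma n0hat_eq_bose: "n0hat x = x^2 * bose x"
  by (simp add: n0hat_def bose_def)

lemma mfun_eq_bose: "mfun x = x^2 * (bose x * (1 + bose x))"
proof (cases "x = 0")
  case False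
  then have "exp x - 1 \<noteq> 0"
    by simp
  then show ?thesis
    by (simp add: mfun_def bose_def field_simps power2_eq_square)
qed (simp add: mfun_def)

lemma one_plus_two_bose_eq: "0 < x \<Longrightarrow> 1 + 2 * bose x = 1 / tanh (x / 2)"
  by (simp add: bose_def tanh_real_altdef exp_minus field_simps)

definition occupation :: "real \<Rightarrow> real \<Rightarrow> real" where
  "occupation \<gamma> x = bose x + \<gamma> * (bose x * (1 + bose x))"

definition occupation_deriv :: "real \<Rightarrow> real \<Rightarrow> real" where
  "occupation_deriv \<gamma> x = - (bose x * (1 + bose x)) * (1 + \<gamma> * (1 + 2 * bose x))"

definition occupation_deriv2 :: "real \<Rightarrow> real \<Rightarrow> real" where
  "occupation_deriv2 \<gamma> x = bose x * (1 + bose x) *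
     ((1 + 2 * bose x) * (1 + \<gamma> * (1 + 2 * bose x)) + 2 * \<gamma> * (bose x * (1 + bose x)))"

lemma occupation_has_real_derivative:
  "x \<noteq> 0 \<Longrightarrow> (occupation \<gamma> has_real_derivative occupation_deriv \<gamma> x) (at x)"
  unfolding occupation_def[abs_def] occupation_deriv_def
  by (auto intro!: derivative_eq_intros bose_has_real_derivative simp: algebra_simps)

lemma occupation_deriv_has_real_derivative:
  "x \<noteq> 0 \<Longrightarrow> (occupation_deriv \<gamma> has_real_derivative occupation_deriv2 \<gamma> x) (at x)"
  unfolding occupation_deriv_def[abs_def] occupation_deriv2_def
  by (auto intro!: derivative_eq_intros bose_has_real_derivative simp: algebra_simps)

lemma n0hat_add_mfun_eq: "n0hat x + \<gamma> * mfun x = x^2 * occupation \<gamma> x"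
  by (simp add: n0hat_eq_bose mfun_eq_bose occupation_def algebra_simps)

lemma Jflux_occupation_eq:
  "Jflux x (x^2 * occupation \<gamma> x) (2 * x * occupation \<gamma> x + x^2 * occupation_deriv \<gamma> x) =
     (\<gamma> * mfun x)^2"
  unfolding Jflux_occupation mfun_eq_bose occupation_def occupation_deriv_def
  by (simp add: algebra_simps power2_eq_square power4_eq_xxxx)

lemma sq_occupation_tendsto_at_right_0:
  "((\<lambda>x. x^2 * occupation \<gamma> x) \<longlongrightarrow> \<gamma>) (at_right 0)"
  unfolding occupation_def bose_def by real_asymp

lemma sq_profile_deriv_tendsto_at_right_0:
  "((\<lambda>x. x^2 * (2 * x * occupation \<gamma> x + x^2 * occupation_deriv \<gamma> x)) \<longlongrightarrow> 0) (at_right 0)"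
  unfolding occupation_def occupation_deriv_def bose_def by real_asymp

lemma two_le_mul_one_plus_two_bose:
  assumes "0 < x"
  shows "2 \<le> x * (1 + 2 * bose x)"
proof -
  have "2 * tanh (x / 2) \<le> x"
    using assms tanh_real_le_self[of "x / 2"] by simp
  then have "2 \<le> x / tanh (x / 2)"
    using assms by (simp add: le_divide_eq)
  then show ?thesis
    using one_plus_two_bose_eq[OF assms] by simp
qed

lemma mfun_has_real_derivative:
  assumes "x \<noteq> 0"
  shows "(mfun has_real_derivative
           x * (bose x * (1 + bose x)) * (2 - x * (1 + 2 * bose x))) (at x)"
  unfolding mfun_eq_bose[abs_def]
  by (auto intro!: derivative_eq_intros bose_has_real_derivative[OF assms]
      simp: algebra_simps power2_eq_square)

lemma deriv_mfun_square_nonpos: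
  assumes "0 < x"
  shows "deriv (\<lambda>y. (\<gamma> * mfun y)^2) x \<le> 0"
proof -
  let ?m' = "x * (bose x * (1 + bose x)) * (2 - x * (1 + 2 * bose x))"
  have "((\<lambda>y. (\<gamma> * mfun y)^2) has_real_derivative 2 * \<gamma>^2 * mfun x * ?m') (at x)"
    using assms by (auto intro!: derivative_eq_intros mfun_has_real_derivative simp: power2_eq_square)
  then have "deriv (\<lambda>y. (\<gamma> * mfun y)^2) x = 2 * \<gamma>^2 * mfun x * ?m'"
    by (rule DERIV_imp_deriv)
  also have "\<dots> \<le> 0"
  proof (rule mult_nonneg_nonpos)
    show "0 \<le> 2 * \<gamma>^2 * mfun x"
      using bose_pos[OF assms] by (simp add: mfun_eq_bose)
    show "?m' \<le> 0"
      using assms bose_pos[OF assms] two_le_mul_one_plus_two_bose[OF assms]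
      by (intro mult_nonneg_nonpos) auto
  qed
  finally show ?thesis .
qed

lemma mfun_le_exp:
  assumes "0 < x"
  shows "mfun x \<le> 4 * exp (- (1/4) * x)"
proof -
  define q where "q = x * exp (x/2) * bose x"
  have exp_bose: "exp x * bose x = 1 + bose x"
    using assms by (simp add: bose_def field_simps)
  have "x \<le> exp (x/2) - exp (- (x/2))"
    using real_le_x_sinh[of "x/2"] assms by (simp add: exp_minus)
  then have "x * exp (x/2) \<le> (exp (x/2) - exp (- (x/2))) * exp (x/2)"
    by (rule mult_right_mono) simp
  then have "x * exp (x/2) \<le> exp x - 1"
    by (simp add: algebra_simps mult_exp_exp)
  then have q: "0 \<le> q" "q \<le> 1"
    using assms by (auto simp: q_def bose_def field_simps)
  have "x * bose x \<le> 1"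
    using assms exp_ge_add_one_self[of x] by (simp add: bose_def field_simps)
  have exp_half: "exp (x/2) * exp (x/2) = exp x"
    by (simp add: mult_exp_exp)
  then have "mfun x = q^2"
    by (simp add: q_def mfun_eq_bose exp_bose[symmetric] power2_eq_square algebra_simps)
  also have "\<dots> \<le> q"
    using q by (simp add: power2_eq_square mult_left_le)
  also have "\<dots> = exp (- (x/2)) * (x * (exp x * bose x))"
    by (simp add: q_def exp_minus field_simps flip: exp_half)
  also have "\<dots> = exp (- (x/2)) * (x + x * bose x)"
    unfolding exp_bose by (simp add: algebra_simps)
  also have "\<dots> \<le> exp (- (x/2)) * (4 * exp (x/4))"
  proof (rule mult_left_mono)
    show "x + x * bose x \<le> 4 * exp (x/4)"
      using \<open>x * bose x \<le> 1\<close> exp_ge_add_one_self[of "x/4"] by linarith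
  qed simp
  also have "\<dots> = 4 * exp (- (1/4) * x)"
    by (simp add: mult_exp_exp)
  finally show ?thesis .
qed

lemma set_integrable_occupation:
  assumes "0 \<le> \<gamma>"
  shows "set_integrable lborel {0<..} (\<lambda>x. x^2 * occupation \<gamma> x)"
proof (rule set_integrable_bound)
  show "set_integrable lborel {0<..} (\<lambda>x. (4 + 4 * \<gamma>) * exp (- (1/4) * x))"
    by (intro set_integrable_mult_right set_integrable_subset[OF set_integrable_exp_minus[where c = 0]]) auto
  have cont: "continuous_on {0<..} (\<lambda>x. x^2 * occupation \<gamma> x)"
    unfolding occupation_def by (intro continuous_intros continuous_on_bose)
  show "set_borel_measurable lborel {0<..} (\<lambda>x. x^2 * occupation \<gamma> x)"
    unfolding set_borel_measurable_def
    using borel_measurable_continuous_on_indicator[OF _ cont] by simp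
  show "AE x in lborel. x \<in> {0<..} \<longrightarrow>
          norm (x^2 * occupation \<gamma> x) \<le> norm ((4 + 4 * \<gamma>) * exp (- (1/4) * x))"
  proof (intro AE_I2 impI)
    fix x :: real
    assume "x \<in> {0<..}"
    then have "0 < x" by simp
    have "0 \<le> n0hat x" "n0hat x \<le> mfun x"
      unfolding n0hat_eq_bose mfun_eq_bose using bose_pos[OF \<open>0 < x\<close>]
      by (auto intro!: mult_left_mono simp: algebra_simps)
    then have "0 \<le> n0hat x + \<gamma> * mfun x" "n0hat x + \<gamma> * mfun x \<le> (1 + \<gamma>) * mfun x"
      using assms by (simp_all add: algebra_simps)
    moreover have "(1 + \<gamma>) * mfun x \<le> (1 + \<gamma>) * (4 * exp (- (1/4) * x))"
      using assms mfun_le_exp[OF \<open>0 < x\<close>] by (intro mult_left_mono) auto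
    ultimately show "norm (x^2 * occupation \<gamma> x) \<le> norm ((4 + 4 * \<gamma>) * exp (- (1/4) * x))"
      using assms by (simp add: n0hat_add_mfun_eq algebra_simps)
  qed
qed

theorem lemma3p6:
  fixes \<gamma> :: real
  assumes "\<gamma> \<ge> 0"
  shows "kompaneets_supersolution (\<lambda>x. n0hat x + \<gamma> * mfun x)
           (\<lambda>x t. n0hat x + \<gamma> * mfun x)"
proof -
  let ?S' = "\<lambda>x. 2 * x * occupation \<gamma> x + x^2 * occupation_deriv \<gamma> x"
  let ?S'' = "\<lambda>x. 2 * occupation \<gamma> x + 4 * x * occupation_deriv \<gamma> x
                  + x^2 * occupation_deriv2 \<gamma> x"
  have "kompaneets_supersolution (\<lambda>x. x^2 * occupation \<gamma> x) (\<lambda>x t. x^2 * occupation \<gamma> x)"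
  proof (rule kompaneets_supersolution_stationary[where S' = ?S' and S'' = ?S''])
    fix x :: real
    assume "0 < x"
    then show "((\<lambda>x. x^2 * occupation \<gamma> x) has_real_derivative ?S' x) (at x)"
      and "(?S' has_real_derivative ?S'' x) (at x)"
      by (auto intro!: derivative_eq_intros occupation_has_real_derivative
          occupation_deriv_has_real_derivative simp: algebra_simps)
    show "deriv (\<lambda>y. Jflux y (y^2 * occupation \<gamma> y) (?S' y)) x \<le> 0"
      using deriv_mfun_square_nonpos[OF \<open>0 < x\<close>] by (simp add: Jflux_occupation_eq)
  next
    show "continuous_on {0<..} ?S''"
      unfolding occupation_def occupation_deriv_def occupation_deriv2_def
      by (intro continuous_intros continuous_on_bose)
    show "\<forall>\<^sub>F x in at_top. 0 \<le> Jflux x (x^2 * occupation \<gamma> x) (?S' x)"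
      by (simp add: Jflux_occupation_eq)
  qed (use assms in \<open>auto intro: set_integrable_occupation sq_occupation_tendsto_at_right_0
         sq_profile_deriv_tendsto_at_right_0\<close>)
  then show ?thesis
    by (simp add: n0hat_add_mfun_eq)
qed

end
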